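(* Let $p$ be prime and $H\le\mathrm{S}_n$ be in $\mathfrak{InP}(\mathrm{C}_p)$, let $\gamma$ be as in the context, and let $M$ be a generator matrix of $\gamma(H)$. For orbit indices $i,j$, let $a_i$ and $a_j$ be the first non-zero entries of the columns $M_{*,i}$ and $M_{*,j}$ respectively. Then $\Omega_i\equiv_H\Omega_j$ if and only if $a_i^{-1}M_{*,i}=a_j^{-1}M_{*,j}$.
   Context: $H\le\mathrm{S}_{n}$, $n=pk$, has orbits $\Omega_1,\dots,\Omega_k$ of size $p$ with each $G_i:=H|_{\Omega_i}$ cyclic of order $p$; $G=G_1\times\dots\times G_k$, $g_1$ generates $G_1$, $g_i$ is the conjugate of $g_1$ by the involution swapping $\Omega_1$ and $\Omega_i$ via a bijection witnessing a permutation isomorphism from $G_1$ to $G_i$, and $\gamma:G\to\mathbb{F}_p^k$ is $\gamma(g_1^{r_1}\cdots g_k^{r_k})=(r_1,\dots,r_k)$. A generator matrix of $\gamma(H)$ is a matrix whose rows form a basis of $\gamma(H)$. $\Omega_i\equiv_H\Omega_j$ means there is a bijection $\psi:\Omega_i\to\Omega_j$ with $\psi(\delta^h)=\psi(\delta)^h$ for all $h\in H$, $\delta\in\Omega_i$. *)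

theory Defs
  imports "Berlekamp_Zassenhaus.Finite_Field" "HOL-Combinatorics.Permutations"
begin

text \<open>Permutations are functions on nat; S_n is the set of permutations of {1..n}.
  The field F_p is the type 'p mod_ring with CARD('p) = p prime.\<close>

definition is_perm_group :: "nat \<Rightarrow> (nat \<Rightarrow> nat) set \<Rightarrow> bool" where
  "is_perm_group n H \<longleftrightarrow> (\<forall>h\<in>H. h permutes {1..n}) \<and> id \<in> H \<and>
     (\<forall>g\<in>H. \<forall>h\<in>H. g \<circ> h \<in> H) \<and> (\<forall>h\<in>H. inv_into UNIV h \<in> H)"

definition orbit_of :: "(nat \<Rightarrow> nat) set \<Rightarrow> nat \<Rightarrow> nat set" where
  "orbit_of H x = {h x | h. h \<in> H}"

definition restr :: "nat set \<Rightarrow> (nat \<Rightarrow> nat) \<Rightarrow> (nat \<Rightarrow> nat)" where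
  "restr Om h = (\<lambda>x. if x \<in> Om then h x else x)"

definition constituent :: "(nat \<Rightarrow> nat) set \<Rightarrow> nat set \<Rightarrow> (nat \<Rightarrow> nat) set" where
  "constituent H Om = restr Om ` H"

definition cyclic_perm_group_of_order :: "(nat \<Rightarrow> nat) set \<Rightarrow> nat \<Rightarrow> bool" where
  "cyclic_perm_group_of_order G m \<longleftrightarrow> card G = m \<and> (\<exists>g\<in>G. G = range (\<lambda>r. g ^^ r))"

definition InP_Cp :: "nat \<Rightarrow> nat \<Rightarrow> nat \<Rightarrow> (nat \<Rightarrow> nat) set \<Rightarrow> (nat \<Rightarrow> nat set) \<Rightarrow> bool" where
  "InP_Cp p n k H Om \<longleftrightarrow> n = p * k \<and> is_perm_group n H \<and>
     {orbit_of H x | x. x \<in> {1..n}} = Om ` {1..k} \<and>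
     (\<forall>i\<in>{1..k}. \<forall>j\<in>{1..k}. i \<noteq> j \<longrightarrow> Om i \<inter> Om j = {}) \<and>
     (\<forall>i\<in>{1..k}. card (Om i) = p \<and> cyclic_perm_group_of_order (constituent H (Om i)) p)"

definition perm_iso_witness ::
  "(nat \<Rightarrow> nat) \<Rightarrow> nat set \<Rightarrow> nat set \<Rightarrow> (nat \<Rightarrow> nat) set \<Rightarrow> (nat \<Rightarrow> nat) set \<Rightarrow> bool" where
  "perm_iso_witness phi A B GA GB \<longleftrightarrow> bij_betw phi A B \<and>
     (\<exists>psi. bij_betw psi GA GB \<and> (\<forall>x\<in>GA. \<forall>y\<in>GA. psi (x \<circ> y) = psi x \<circ> psi y) \<and>
        (\<forall>x\<in>GA. \<forall>d\<in>A. phi (x d) = psi x (phi d)))"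

definition swap_inv :: "(nat \<Rightarrow> nat) \<Rightarrow> nat set \<Rightarrow> nat set \<Rightarrow> nat \<Rightarrow> nat" where
  "swap_inv phi A B = (\<lambda>x. if x \<in> A then phi x else if x \<in> B then inv_into A phi x else x)"

definition gen_i :: "(nat \<Rightarrow> nat set) \<Rightarrow> (nat \<Rightarrow> nat \<Rightarrow> nat) \<Rightarrow> (nat \<Rightarrow> nat) \<Rightarrow> nat \<Rightarrow> nat \<Rightarrow> nat" where
  "gen_i Om phi g1 i = (if i = 1 then g1 else
      swap_inv (phi i) (Om 1) (Om i) \<circ> g1 \<circ> swap_inv (phi i) (Om 1) (Om i))"

text \<open>gamma(g_1^r_1 ... g_k^r_k) = (r_1,...,r_k); for an element h of H (viewed in
  G = G_1 x ... x G_k) the i-th coordinate is r mod p where h agrees with g_i^r on Om i.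
  Vectors of F_p^k are functions nat \<Rightarrow> 'p mod_ring supported on {1..k}.\<close>
definition gamma :: "nat \<Rightarrow> (nat \<Rightarrow> nat set) \<Rightarrow> (nat \<Rightarrow> nat \<Rightarrow> nat) \<Rightarrow> (nat \<Rightarrow> nat)
     \<Rightarrow> (nat \<Rightarrow> nat) \<Rightarrow> nat \<Rightarrow> 'p::prime_card mod_ring" where
  "gamma k Om phi g1 h = (\<lambda>i. if i \<in> {1..k} then
      of_nat (SOME r. \<forall>x\<in>Om i. h x = (gen_i Om phi g1 i ^^ r) x) else 0)"

text \<open>Rows of a d x k matrix M (rows 0..<d, columns 1..k), as vectors.\<close>
definition mrow :: "nat \<Rightarrow> (nat \<Rightarrow> nat \<Rightarrow> 'f::field) \<Rightarrow> nat \<Rightarrow> nat \<Rightarrow> 'f" where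
  "mrow k M l = (\<lambda>i. if i \<in> {1..k} then M l i else 0)"

definition lin_comb :: "nat \<Rightarrow> nat \<Rightarrow> (nat \<Rightarrow> nat \<Rightarrow> 'f::field) \<Rightarrow> (nat \<Rightarrow> 'f) \<Rightarrow> nat \<Rightarrow> 'f" where
  "lin_comb k d M c = (\<lambda>i. \<Sum>l<d. c l * mrow k M l i)"

definition generator_matrix :: "nat \<Rightarrow> (nat \<Rightarrow> 'f::field) set \<Rightarrow> nat \<Rightarrow> (nat \<Rightarrow> nat \<Rightarrow> 'f) \<Rightarrow> bool" where
  "generator_matrix k V d M \<longleftrightarrow>
     (\<forall>l<d. mrow k M l \<in> V) \<and>
     (\<forall>c. lin_comb k d M c = (\<lambda>_. 0) \<longrightarrow> (\<forall>l<d. c l = 0)) \<and>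
     V = {lin_comb k d M c | c. True}"

definition first_nonzero :: "nat \<Rightarrow> (nat \<Rightarrow> nat \<Rightarrow> 'f::field) \<Rightarrow> nat \<Rightarrow> 'f" where
  "first_nonzero d M i = M (LEAST l. l < d \<and> M l i \<noteq> 0) i"

definition perm_equiv :: "(nat \<Rightarrow> nat) set \<Rightarrow> nat set \<Rightarrow> nat set \<Rightarrow> bool" where
  "perm_equiv H A B \<longleftrightarrow> (\<exists>psi. bij_betw psi A B \<and> (\<forall>h\<in>H. \<forall>d\<in>A. psi (h d) = h (psi d)))"

end

theory Submission
  imports Defs "HOL-Combinatorics.Cycles"
begin

text \<open>
  Each orbit \<open>Om i\<close> is a regular orbit of the cyclic group generated by \<open>g\<^sub>i\<close>, which has
  order \<open>p\<close>; choosing a base point identifies \<open>Om i\<close> with \<open>\<int>/p\<close>, and \<open>h \<in> H\<close> then acts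
  by translation by \<open>\<gamma>(h)\<^sub>i\<close>. Under these identifications an \<open>H\<close>-equivariant bijection
  \<open>Om i \<rightarrow> Om j\<close> becomes a bijection \<open>f\<close> of \<open>\<int>/p\<close> with \<open>f (z + \<gamma>(h)\<^sub>i) = f z + \<gamma>(h)\<^sub>j\<close>.
  Since \<open>\<gamma>(h)\<^sub>i = 1\<close> for some \<open>h\<close>, such an \<open>f\<close> is affine, \<open>f z = f 0 + c z\<close> with \<open>c \<noteq> 0\<close>;
  so the orbits are equivalent iff the coordinates \<open>i\<close> and \<open>j\<close> of \<open>\<gamma>(H)\<close> are proportional
  by a nonzero factor. That is a linear condition, so it may be tested on the rows of \<open>M\<close>,
  and for nonzero columns it amounts to equality after scaling by the first nonzero entries.
\<close>

lemma of_nat_mod_ring_eq_iff: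
  "(of_nat r :: 'p::prime_card mod_ring) = of_nat s \<longleftrightarrow> r mod CARD('p) = s mod CARD('p)"
  by (simp add: of_nat_eq_iff_cong_CHAR cong_def)

lemma funpow_eq_iff_mod_card_powers:
  fixes f :: "'a \<Rightarrow> 'a"
  assumes inj: "inj f" and fin: "finite (range (\<lambda>r. f ^^ r))"
  shows "f ^^ r = f ^^ s \<longleftrightarrow> r mod card (range (\<lambda>r. f ^^ r)) = s mod card (range (\<lambda>r. f ^^ r))"
proof -
  have shift: "f ^^ (v - u) = id" if "u \<le> v" "f ^^ u = f ^^ v" for u v
    using funpow_diff[OF inj that(1)] that(2) by auto
  have "\<not> inj (\<lambda>r::nat. f ^^ r)"
    using fin finite_imageD by blast
  then obtain u v where "u < v" "f ^^ u = f ^^ v"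
    unfolding inj_def by (metis nat_neq_iff)
  then have "\<exists>m>0. f ^^ m = id"
    using shift by (intro exI[of _ "v - u"]) auto
  define m where "m = (LEAST m. 0 < m \<and> f ^^ m = id)"
  have m: "0 < m" "f ^^ m = id"
    using LeastI_ex[OF \<open>\<exists>m>0. f ^^ m = id\<close>] unfolding m_def by auto
  have reduce: "f ^^ r = f ^^ (r mod m)" for r
    using m(2) by (simp add: fun_eq_iff funpow_mod_eq)
  have inj_below: "inj_on (\<lambda>r. f ^^ r) {..<m}"
  proof (rule linorder_inj_onI', rule notI)
    fix u v assume "u \<in> {..<m}" "v \<in> {..<m}" "u < v" "f ^^ u = f ^^ v"
    then have "0 < v - u \<and> f ^^ (v - u) = id" "v - u < m"
      using shift by auto
    then show False
      using not_less_Least unfolding m_def by blast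
  qed
  have "range (\<lambda>r. f ^^ r) = (\<lambda>r. f ^^ r) ` {..<m}"
    using reduce m(1) by (auto intro: image_eqI[of _ _ "_ mod m"])
  then have card: "card (range (\<lambda>r. f ^^ r)) = m"
    using inj_below card_image by fastforce
  have "f ^^ r = f ^^ s \<longleftrightarrow> f ^^ (r mod m) = f ^^ (s mod m)"
    using reduce by metis
  also have "\<dots> \<longleftrightarrow> r mod m = s mod m"
    using inj_onD[OF inj_below] m(1) by auto
  finally show ?thesis
    unfolding card .
qed

section \<open>Equivalence of regular cyclic orbits\<close>

lemma perm_equiv_iff_equivariant_bij:
  fixes pt pt' :: "'z::plus \<Rightarrow> nat" and e e' :: "(nat \<Rightarrow> nat) \<Rightarrow> 'z"
  assumes pt: "bij_betw pt UNIV A" and pt': "bij_betw pt' UNIV B"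
    and act: "\<And>h z. h \<in> H \<Longrightarrow> h (pt z) = pt (z + e h)"
    and act': "\<And>h z. h \<in> H \<Longrightarrow> h (pt' z) = pt' (z + e' h)"
  shows "perm_equiv H A B \<longleftrightarrow> (\<exists>f. bij f \<and> (\<forall>h\<in>H. \<forall>z. f (z + e h) = f z + e' h))"
proof
  assume "perm_equiv H A B"
  then obtain psi where psi: "bij_betw psi A B" "\<forall>h\<in>H. \<forall>x\<in>A. psi (h x) = h (psi x)"
    unfolding perm_equiv_def by blast
  define f where "f = inv_into UNIV pt' \<circ> psi \<circ> pt"
  have "bij f"
    unfolding f_def using pt psi(1) bij_betw_inv_into[OF pt'] by (blast intro: bij_betw_trans)
  moreover have "f (z + e h) = f z + e' h" if h: "h \<in> H" for h z
  proof -
    have "pt z \<in> A"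
      using pt by (auto dest: bij_betwE)
    then have "psi (pt z) \<in> B"
      using psi(1) by (auto dest: bij_betwE)
    then have pt'_f: "pt' (f z) = psi (pt z)"
      unfolding f_def using pt' by (simp add: bij_betw_def f_inv_into_f)
    have "f (z + e h) = inv_into UNIV pt' (h (psi (pt z)))"
      using act[OF h, of z, symmetric] psi(2) h \<open>pt z \<in> A\<close> by (simp add: f_def)
    also have "\<dots> = f z + e' h"
      unfolding pt'_f[symmetric] act'[OF h] using pt' by (simp add: bij_betw_def)
    finally show ?thesis .
  qed
  ultimately show "\<exists>f. bij f \<and> (\<forall>h\<in>H. \<forall>z. f (z + e h) = f z + e' h)" by blast
next
  assume "\<exists>f. bij f \<and> (\<forall>h\<in>H. \<forall>z. f (z + e h) = f z + e' h)"
  then obtain f where f: "bij f" "\<forall>h\<in>H. \<forall>z. f (z + e h) = f z + e' h" by blast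
  define psi where "psi = pt' \<circ> f \<circ> inv_into UNIV pt"
  have "bij_betw psi A B"
    unfolding psi_def using bij_betw_inv_into[OF pt] f(1) pt' by (blast intro: bij_betw_trans)
  moreover have "psi (h x) = h (psi x)" if h: "h \<in> H" and x: "x \<in> A" for h x
  proof -
    obtain z where z: "x = pt z"
      using x pt by (auto simp: bij_betw_def)
    have "psi (h x) = pt' (f (z + e h))"
      unfolding psi_def z act[OF h] using pt by (simp add: bij_betw_def)
    also have "\<dots> = h (psi x)"
      unfolding psi_def z using f(2) h act'[OF h] pt by (simp add: bij_betw_def)
    finally show ?thesis .
  qed
  ultimately show "perm_equiv H A B"
    unfolding perm_equiv_def by blast
qed

lemma translation_equivariant_bij_iff_proportional:
  fixes e e' :: "'h \<Rightarrow> 'p::prime_card mod_ring"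
  assumes h0: "h0 \<in> H" "e h0 = 1"
  shows "(\<exists>f. bij f \<and> (\<forall>h\<in>H. \<forall>z. f (z + e h) = f z + e' h)) \<longleftrightarrow>
    (\<exists>c. c \<noteq> 0 \<and> (\<forall>h\<in>H. e' h = c * e h))"
proof
  assume "\<exists>f. bij f \<and> (\<forall>h\<in>H. \<forall>z. f (z + e h) = f z + e' h)"
  then obtain f where f: "bij f" "\<forall>h\<in>H. \<forall>z. f (z + e h) = f z + e' h" by blast
  let ?s = "e' h0"
  have "f (of_nat m) = f 0 + of_nat m * ?s" for m
  proof (induction m)
    case (Suc m)
    have "f (of_nat (Suc m)) = f (of_nat m + e h0)"
      using h0(2) by (simp add: add.commute)
    then show ?case
      using f(2) h0(1) Suc by (simp add: algebra_simps)
  qed simp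
  then have affine: "f z = f 0 + z * ?s" for z
    using surj_of_nat_mod_ring[of z] by auto
  have "?s \<noteq> 0"
  proof
    assume "?s = 0"
    then have "f 1 = f 0" using affine[of 1] by simp
    then show False using f(1) by (simp add: bij_def inj_eq)
  qed
  moreover have "e' h = ?s * e h" if "h \<in> H" for h
    using f(2) that affine[of "e h"] by (metis add_0 add_left_cancel mult.commute)
  ultimately show "\<exists>c. c \<noteq> 0 \<and> (\<forall>h\<in>H. e' h = c * e h)" by blast
next
  assume "\<exists>c. c \<noteq> 0 \<and> (\<forall>h\<in>H. e' h = c * e h)"
  then obtain c where c: "c \<noteq> 0" "\<forall>h\<in>H. e' h = c * e h" by blast
  have "bij ((*) c)"
    using c(1) by (intro o_bij[of "(*) (inverse c)"]) (auto simp: fun_eq_iff)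
  moreover have "c * (z + e h) = c * z + e' h" if "h \<in> H" for h z
    using c(2) that by (simp add: distrib_left)
  ultimately show "\<exists>f. bij f \<and> (\<forall>h\<in>H. \<forall>z. f (z + e h) = f z + e' h)" by blast
qed

locale cyclic_orbit =
  fixes H :: "(nat \<Rightarrow> nat) set" and Om :: "nat set" and x0 :: nat and a :: "nat \<Rightarrow> nat"
    and e :: "(nat \<Rightarrow> nat) \<Rightarrow> 'p::prime_card mod_ring"
  assumes orbit_eq: "Om = range (\<lambda>m. (a ^^ m) x0)"
    and power_eq_iff: "(a ^^ m) x0 = (a ^^ m') x0 \<longleftrightarrow> (of_nat m :: 'p mod_ring) = of_nat m'"
    and acts_by_exponent: "h \<in> H \<Longrightarrow> \<exists>r. e h = of_nat r \<and> (\<forall>x\<in>Om. h x = (a ^^ r) x)"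
    and exponent_one: "\<exists>h\<in>H. e h = 1"
begin

definition point :: "'p mod_ring \<Rightarrow> nat" where
  "point z = (a ^^ (SOME m. of_nat m = z)) x0"

lemma point_of_nat: "point (of_nat m) = (a ^^ m) x0"
proof -
  have "(of_nat (SOME m'. of_nat m' = (of_nat m :: 'p mod_ring)) :: 'p mod_ring) = of_nat m"
    by (rule someI) (rule refl)
  then show ?thesis
    unfolding point_def using power_eq_iff by blast
qed

lemma bij_point: "bij_betw point UNIV Om"
proof (rule bij_betw_imageI)
  show "inj point"
  proof (rule injI)
    fix z w :: "'p mod_ring" assume "point z = point w"
    moreover obtain m m' where "z = of_nat m" "w = of_nat m'"
      using surj_of_nat_mod_ring by metis
    ultimately show "z = w"
      using power_eq_iff by (simp add: point_of_nat)
  qed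
  have "surj (of_nat :: nat \<Rightarrow> 'p mod_ring)"
    unfolding surj_def using surj_of_nat_mod_ring by blast
  then have "range point = range (\<lambda>m. point (of_nat m))"
    by (metis image_image)
  then show "range point = Om"
    unfolding orbit_eq point_of_nat .
qed

lemma point_action:
  assumes h: "h \<in> H" shows "h (point z) = point (z + e h)"
proof -
  obtain r where r: "e h = of_nat r" "\<forall>x\<in>Om. h x = (a ^^ r) x"
    using acts_by_exponent[OF h] by blast
  obtain m where m: "z = of_nat m"
    using surj_of_nat_mod_ring by metis
  have "h (point z) = (a ^^ r) ((a ^^ m) x0)"
    using r(2) unfolding m point_of_nat orbit_eq by blast
  also have "\<dots> = point (of_nat (r + m))"
    by (simp only: point_of_nat funpow_add o_apply)
  also have "\<dots> = point (z + e h)"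
    by (simp add: m r(1) add.commute)
  finally show ?thesis .
qed

end

lemma perm_equiv_iff_exponents_proportional:
  assumes A: "cyclic_orbit H A x0 a e" and B: "cyclic_orbit H B y0 b e'"
  shows "perm_equiv H A B \<longleftrightarrow> (\<exists>c. c \<noteq> 0 \<and> (\<forall>h\<in>H. e' h = c * e h))"
proof -
  interpret A: cyclic_orbit H A x0 a e by (rule A)
  interpret B: cyclic_orbit H B y0 b e' by (rule B)
  obtain h0 where h0: "h0 \<in> H" "e h0 = 1"
    using A.exponent_one by blast
  have "perm_equiv H A B \<longleftrightarrow> (\<exists>f. bij f \<and> (\<forall>h\<in>H. \<forall>z. f (z + e h) = f z + e' h))"
    by (rule perm_equiv_iff_equivariant_bij[OF A.bij_point B.bij_point A.point_action B.point_action])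
  also have "\<dots> \<longleftrightarrow> (\<exists>c. c \<noteq> 0 \<and> (\<forall>h\<in>H. e' h = c * e h))"
    by (rule translation_equivariant_bij_iff_proportional[where e = e, OF h0])
  finally show ?thesis .
qed

section \<open>Cyclic constituents\<close>

definition orbit_exponent :: "'a set \<Rightarrow> ('a \<Rightarrow> 'a) \<Rightarrow> ('a \<Rightarrow> 'a) \<Rightarrow> 'r::semiring_1" where
  "orbit_exponent Om a h = of_nat (SOME r. \<forall>x\<in>Om. h x = (a ^^ r) x)"

lemma funpow_eq_on_invariant:
  assumes "\<And>x. x \<in> Om \<Longrightarrow> a x = b x" and "\<And>x. x \<in> Om \<Longrightarrow> b x \<in> Om" and "x \<in> Om"
  shows "(a ^^ r) x = (b ^^ r) x \<and> (b ^^ r) x \<in> Om"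
  using assms(3) by (induction r) (auto simp: assms(1,2))

lemma inj_restr:
  assumes "inj h" and "\<And>x. x \<in> Om \<Longrightarrow> h x \<in> Om"
  shows "inj (restr Om h)"
proof (rule injI)
  fix x y assume "restr Om h x = restr Om h y"
  then show "x = y"
    using assms unfolding restr_def by (auto split: if_splits dest: injD)
qed

lemma orbit_of_self: "is_perm_group n H \<Longrightarrow> x0 \<in> orbit_of H x0"
  unfolding is_perm_group_def orbit_of_def by (auto intro!: exI[of _ id])

lemma orbit_of_closed:
  assumes "is_perm_group n H" "h \<in> H" "x \<in> orbit_of H x0"
  shows "h x \<in> orbit_of H x0"
proof -
  obtain g where "g \<in> H" "x = g x0"
    using assms(3) unfolding orbit_of_def by blast
  then show ?thesis
    using assms(1,2) unfolding is_perm_group_def orbit_of_def by (auto intro!: exI[of _ "h \<circ> g"])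
qed

lemma constituent_orbit_of:
  assumes "is_perm_group n H" "g \<in> constituent H (orbit_of H x0)"
  shows "inj g" and "x \<in> orbit_of H x0 \<Longrightarrow> g x \<in> orbit_of H x0"
proof -
  obtain h where h: "h \<in> H" "g = restr (orbit_of H x0) h"
    using assms(2) unfolding constituent_def by blast
  then have "inj h"
    using assms(1) permutes_inj unfolding is_perm_group_def by blast
  then show "inj g"
    using h orbit_of_closed[OF assms(1) h(1)] by (simp add: inj_restr)
  show "x \<in> orbit_of H x0 \<Longrightarrow> g x \<in> orbit_of H x0"
    using h orbit_of_closed[OF assms(1) h(1)] by (simp add: restr_def)
qed

locale cyclic_constituent =
  fixes n :: nat and H :: "(nat \<Rightarrow> nat) set" and Om :: "nat set" and x0 :: nat
    and b :: "nat \<Rightarrow> nat" and a :: "nat \<Rightarrow> nat"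
  assumes perm_group: "is_perm_group n H"
    and orbit: "Om = orbit_of H x0"
    and generator_in: "b \<in> constituent H Om"
    and generates: "constituent H Om = range (\<lambda>r. b ^^ r)"
    and finite_constituent: "finite (constituent H Om)"
    and agrees: "\<And>x. x \<in> Om \<Longrightarrow> a x = b x"
begin

lemma base_in: "x0 \<in> Om"
  using orbit orbit_of_self[OF perm_group] by blast

lemma generator_restr: obtains hb where "hb \<in> H" "b = restr Om hb"
  using generator_in unfolding constituent_def by blast

lemma generator_maps_into: "x \<in> Om \<Longrightarrow> b x \<in> Om"
  using constituent_orbit_of(2)[OF perm_group, of b x0 x] generator_in orbit by simp

lemma generator_power_outside: "x \<notin> Om \<Longrightarrow> (b ^^ r) x = x"
proof -
  obtain hb where "b = restr Om hb"
    by (rule generator_restr)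
  then show "x \<notin> Om \<Longrightarrow> (b ^^ r) x = x"
    by (induction r) (simp_all add: restr_def)
qed

lemma power_agrees: "x \<in> Om \<Longrightarrow> (a ^^ r) x = (b ^^ r) x"
  and generator_power_in: "x \<in> Om \<Longrightarrow> (b ^^ r) x \<in> Om"
  using funpow_eq_on_invariant[OF agrees generator_maps_into] by auto

lemma acts_by_generator_power:
  assumes "h \<in> H" shows "\<exists>r. \<forall>x\<in>Om. h x = (b ^^ r) x"
proof -
  have "restr Om h \<in> range (\<lambda>r. b ^^ r)"
    using assms generates unfolding constituent_def by blast
  then obtain r where r: "restr Om h = b ^^ r"
    by blast
  have "h x = (b ^^ r) x" if "x \<in> Om" for x
    using that fun_cong[OF r, of x] by (simp add: restr_def)
  then show ?thesis
    by blast
qed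

lemma acts_by_power:
  assumes "h \<in> H" shows "\<exists>r. \<forall>x\<in>Om. h x = (a ^^ r) x"
  using acts_by_generator_power[OF assms] power_agrees by simp

lemma orbit_eq_powers: "Om = range (\<lambda>m. (a ^^ m) x0)"
proof
  show "Om \<subseteq> range (\<lambda>m. (a ^^ m) x0)"
  proof
    fix x assume "x \<in> Om"
    then obtain h where "h \<in> H" "x = h x0"
      unfolding orbit orbit_of_def by blast
    then show "x \<in> range (\<lambda>m. (a ^^ m) x0)"
      using acts_by_power base_in by blast
  qed
  show "range (\<lambda>m. (a ^^ m) x0) \<subseteq> Om"
    using generator_power_in base_in by (auto simp: power_agrees)
qed

lemma generator_power_eq_iff:
  "b ^^ r = b ^^ s \<longleftrightarrow> r mod card (constituent H Om) = s mod card (constituent H Om)"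
proof -
  have "inj b"
    using constituent_orbit_of(1)[OF perm_group, of b x0] generator_in orbit by simp
  then show ?thesis
    using funpow_eq_iff_mod_card_powers[of b r s] finite_constituent unfolding generates by simp
qed

text \<open>The cyclic group generated by \<open>b\<close> is abelian and transitive on \<open>Om\<close>, hence regular.\<close>
lemma generator_power_eq_iff_at_base: "(b ^^ r) x0 = (b ^^ s) x0 \<longleftrightarrow> b ^^ r = b ^^ s"
proof
  assume base: "(b ^^ r) x0 = (b ^^ s) x0"
  have commute: "(b ^^ u) ((b ^^ t) y) = (b ^^ t) ((b ^^ u) y)" for u t y
    by (metis add.commute comp_apply funpow_add)
  show "b ^^ r = b ^^ s"
  proof
    fix x show "(b ^^ r) x = (b ^^ s) x"
    proof (cases "x \<in> Om")
      case True
      then obtain h where "h \<in> H" "x = h x0"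
        unfolding orbit orbit_of_def by blast
      then obtain t where "x = (b ^^ t) x0"
        using acts_by_generator_power base_in by blast
      then show ?thesis
        using base commute[of r t x0] commute[of s t x0] by simp
    qed (simp add: generator_power_outside)
  qed
qed simp

lemma power_eq_iff_mod:
  "(a ^^ m) x0 = (a ^^ m') x0 \<longleftrightarrow> m mod card (constituent H Om) = m' mod card (constituent H Om)"
  using generator_power_eq_iff_at_base generator_power_eq_iff by (simp add: power_agrees base_in)

lemma orbit_exponent_eq:
  assumes card: "card (constituent H Om) = CARD('p::prime_card)"
    and r: "\<forall>x\<in>Om. h x = (a ^^ r) x"
  shows "(orbit_exponent Om a h :: 'p mod_ring) = of_nat r"
proof -
  let ?r = "SOME r. \<forall>x\<in>Om. h x = (a ^^ r) x"
  have "\<forall>x\<in>Om. h x = (a ^^ ?r) x"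
    using someI[of "\<lambda>r. \<forall>x\<in>Om. h x = (a ^^ r) x", OF r] .
  then have "(a ^^ ?r) x0 = (a ^^ r) x0"
    using r base_in by (metis (no_types))
  then show ?thesis
    unfolding orbit_exponent_def of_nat_mod_ring_eq_iff power_eq_iff_mod card .
qed

lemma cyclic_orbitI:
  assumes card: "card (constituent H Om) = CARD('p::prime_card)"
  shows "cyclic_orbit H Om x0 a (orbit_exponent Om a :: _ \<Rightarrow> 'p mod_ring)"
proof
  show "Om = range (\<lambda>m. (a ^^ m) x0)"
    by (rule orbit_eq_powers)
  show "(a ^^ m) x0 = (a ^^ m') x0 \<longleftrightarrow> (of_nat m :: 'p mod_ring) = of_nat m'" for m m'
    unfolding of_nat_mod_ring_eq_iff power_eq_iff_mod card ..
  show "\<exists>r. (orbit_exponent Om a h :: 'p mod_ring) = of_nat r \<and> (\<forall>x\<in>Om. h x = (a ^^ r) x)"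
    if "h \<in> H" for h
    using acts_by_power[OF that] orbit_exponent_eq[OF card] by blast
  obtain hb where hb: "hb \<in> H" "b = restr Om hb"
    by (rule generator_restr)
  then have "(orbit_exponent Om a hb :: 'p mod_ring) = of_nat 1"
    using agrees by (intro orbit_exponent_eq[OF card]) (simp add: restr_def)
  then show "\<exists>h\<in>H. (orbit_exponent Om a h :: 'p mod_ring) = 1"
    using hb(1) by auto
qed

end

section \<open>Groups in InP(C_p)\<close>

lemma perm_iso_witness_transports_generator:
  assumes iso: "perm_iso_witness phi A B GA GB"
    and g: "g \<in> GA" "GA = range (\<lambda>r. g ^^ r)"
    and inj: "\<And>f. f \<in> GB \<Longrightarrow> inj f"
  shows "\<exists>b\<in>GB. GB = range (\<lambda>r. b ^^ r) \<and> (\<forall>x\<in>A. b (phi x) = phi (g x))"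
proof -
  obtain psi where psi: "bij_betw psi GA GB"
    and hom: "\<And>x y. x \<in> GA \<Longrightarrow> y \<in> GA \<Longrightarrow> psi (x \<circ> y) = psi x \<circ> psi y"
    and comm: "\<And>x d. x \<in> GA \<Longrightarrow> d \<in> A \<Longrightarrow> phi (x d) = psi x (phi d)"
    using iso unfolding perm_iso_witness_def by blast
  have powers: "g ^^ r \<in> GA" for r
    using g(2) by blast
  have "psi id = id"
  proof
    fix x
    have "id \<in> GA"
      using powers[of 0] by simp
    then have "psi id = psi id \<circ> psi id" "inj (psi id)"
      using hom[of id id] inj psi by (auto dest: bij_betwE)
    then show "psi id x = id x"
      by (metis comp_apply id_apply injD)
  qed
  then have psi_power: "psi (g ^^ r) = psi g ^^ r" for r
    by (induction r) (simp_all add: hom g(1) powers)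
  have "GB = psi ` GA"
    using psi by (simp add: bij_betw_def)
  then have "GB = range (\<lambda>r. psi g ^^ r)"
    unfolding g(2) image_image psi_power .
  moreover have "psi g \<in> GB"
    using psi g(1) by (auto dest: bij_betwE)
  moreover have "\<forall>x\<in>A. psi g (phi x) = phi (g x)"
    using comm g(1) by simp
  ultimately show ?thesis
    by blast
qed

lemma swap_inv_conjugate:
  assumes phi: "bij_betw phi A B" and disj: "A \<inter> B = {}"
    and g: "\<And>x. x \<in> A \<Longrightarrow> g x \<in> A" and x: "x \<in> A"
  shows "(swap_inv phi A B \<circ> g \<circ> swap_inv phi A B) (phi x) = phi (g x)"
proof -
  have "phi x \<in> B" "phi x \<notin> A" "inv_into A phi (phi x) = x"
    using phi disj x by (auto simp: bij_betw_def)
  then show ?thesis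
    using g x by (simp add: swap_inv_def)
qed

lemma InP_orbit:
  assumes "InP_Cp p n k H Om" and "i \<in> {1..k}"
  obtains x0 where "Om i = orbit_of H x0"
proof -
  have "Om i \<in> {orbit_of H x | x. x \<in> {1..n}}"
    using assms unfolding InP_Cp_def by blast
  then show ?thesis
    using that by blast
qed

lemma InP_gen_i_generates_constituent:
  assumes InP: "InP_Cp p n k H Om"
    and g1: "g1 \<in> constituent H (Om 1)" "constituent H (Om 1) = range (\<lambda>r. g1 ^^ r)"
    and phi: "\<forall>i\<in>{1..k}. perm_iso_witness (phi i) (Om 1) (Om i)
                 (constituent H (Om 1)) (constituent H (Om i))"
    and i: "i \<in> {1..k}"
  shows "\<exists>b. b \<in> constituent H (Om i) \<and> constituent H (Om i) = range (\<lambda>r. b ^^ r) \<and>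
    (\<forall>x\<in>Om i. gen_i Om phi g1 i x = b x)"
proof (cases "i = 1")
  case True
  then have "\<forall>x\<in>Om i. gen_i Om phi g1 i x = g1 x"
    by (simp add: gen_i_def)
  then show ?thesis
    using g1 True by blast
next
  case False
  have grp: "is_perm_group n H"
    using InP unfolding InP_Cp_def by blast
  have one: "1 \<in> {1..k}"
    using i by simp
  obtain x1 where x1: "Om 1 = orbit_of H x1"
    using InP_orbit[OF InP one] .
  obtain xi where xi: "Om i = orbit_of H xi"
    using InP_orbit[OF InP i] .
  have iso: "perm_iso_witness (phi i) (Om 1) (Om i) (constituent H (Om 1)) (constituent H (Om i))"
    using phi i by blast
  then have bij: "bij_betw (phi i) (Om 1) (Om i)"
    unfolding perm_iso_witness_def by blast
  have disj: "Om 1 \<inter> Om i = {}"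
    using InP False i one unfolding InP_Cp_def by blast
  have g1_maps: "g1 x \<in> Om 1" if "x \<in> Om 1" for x
    using constituent_orbit_of(2)[OF grp, of g1 x1 x] g1(1) that unfolding x1 by simp
  obtain b where b: "b \<in> constituent H (Om i)" "constituent H (Om i) = range (\<lambda>r. b ^^ r)"
    and b_phi: "\<forall>x\<in>Om 1. b (phi i x) = phi i (g1 x)"
    using perm_iso_witness_transports_generator[OF iso g1] constituent_orbit_of(1)[OF grp]
    unfolding xi by blast
  have "gen_i Om phi g1 i y = b y" if "y \<in> Om i" for y
  proof -
    obtain x where "x \<in> Om 1" "y = phi i x"
      using bij \<open>y \<in> Om i\<close> by (auto simp: bij_betw_def)
    then show ?thesis
      using swap_inv_conjugate[OF bij disj g1_maps] b_phi False by (simp add: gen_i_def)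
  qed
  then show ?thesis
    using b by blast
qed

lemma InP_cyclic_orbit:
  fixes H :: "(nat \<Rightarrow> nat) set"
  assumes InP: "InP_Cp CARD('p::prime_card) n k H Om"
    and g1: "g1 \<in> constituent H (Om 1)" "constituent H (Om 1) = range (\<lambda>r. g1 ^^ r)"
    and phi: "\<forall>i\<in>{1..k}. perm_iso_witness (phi i) (Om 1) (Om i)
                 (constituent H (Om 1)) (constituent H (Om i))"
    and i: "i \<in> {1..k}"
  obtains x0 where "cyclic_orbit H (Om i) x0 (gen_i Om phi g1 i)
    (\<lambda>h. gamma k Om phi g1 h i :: 'p mod_ring)"
proof -
  obtain x0 where x0: "Om i = orbit_of H x0"
    using InP_orbit[OF InP i] .
  obtain b where b: "b \<in> constituent H (Om i)" "constituent H (Om i) = range (\<lambda>r. b ^^ r)"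
    and gen: "\<forall>x\<in>Om i. gen_i Om phi g1 i x = b x"
    using InP_gen_i_generates_constituent[OF InP g1 phi i] by blast
  have card: "card (constituent H (Om i)) = CARD('p)"
    using InP i unfolding InP_Cp_def cyclic_perm_group_of_order_def by blast
  interpret cyclic_constituent n H "Om i" x0 b "gen_i Om phi g1 i"
    using InP x0 b card gen unfolding InP_Cp_def by unfold_locales (auto intro: card_ge_0_finite)
  have "cyclic_orbit H (Om i) x0 (gen_i Om phi g1 i)
    (orbit_exponent (Om i) (gen_i Om phi g1 i) :: _ \<Rightarrow> 'p mod_ring)"
    by (rule cyclic_orbitI[OF card])
  moreover have "orbit_exponent (Om i) (gen_i Om phi g1 i) = (\<lambda>h. gamma k Om phi g1 h i :: 'p mod_ring)"
    using i by (simp add: fun_eq_iff orbit_exponent_def gamma_def)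
  ultimately show ?thesis
    by (simp add: that)
qed

section \<open>Columns of a generator matrix\<close>

lemma generator_matrix_columns_proportional_iff:
  fixes M :: "nat \<Rightarrow> nat \<Rightarrow> 'f::field"
  assumes M: "generator_matrix k V d M" and ij: "i \<in> {1..k}" "j \<in> {1..k}"
  shows "(\<forall>v\<in>V. v j = c * v i) \<longleftrightarrow> (\<forall>l<d. M l j = c * M l i)"
proof
  assume "\<forall>v\<in>V. v j = c * v i"
  moreover have "mrow k M l \<in> V" if "l < d" for l
    using M that unfolding generator_matrix_def by blast
  ultimately show "\<forall>l<d. M l j = c * M l i"
    using ij unfolding mrow_def by fastforce
next
  assume cols: "\<forall>l<d. M l j = c * M l i"
  show "\<forall>v\<in>V. v j = c * v i"
  proof
    fix v assume "v \<in> V"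
    then obtain coef where v: "v = lin_comb k d M coef"
      using M unfolding generator_matrix_def by blast
    have "v j = (\<Sum>l<d. coef l * (c * M l i))"
      using v ij cols by (simp add: lin_comb_def mrow_def)
    also have "\<dots> = c * v i"
      using v ij by (simp add: lin_comb_def mrow_def sum_distrib_left algebra_simps)
    finally show "v j = c * v i" .
  qed
qed

lemma generator_matrix_column_nonzero:
  fixes M :: "nat \<Rightarrow> nat \<Rightarrow> 'f::field"
  assumes "generator_matrix k V d M" "i \<in> {1..k}" "v \<in> V" "v i \<noteq> 0"
  shows "\<exists>l<d. M l i \<noteq> 0"
  using generator_matrix_columns_proportional_iff[OF assms(1,2,2), of 0] assms(3,4) by auto

lemma first_nonzero_neq_zero:
  fixes M :: "nat \<Rightarrow> nat \<Rightarrow> 'f::field"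
  assumes "\<exists>l<d. M l i \<noteq> 0"
  shows "first_nonzero d M i \<noteq> 0"
  using LeastI_ex[OF assms] unfolding first_nonzero_def by blast

lemma columns_proportional_iff_normalized_eq:
  fixes M :: "nat \<Rightarrow> nat \<Rightarrow> 'f::field"
  assumes ni: "\<exists>l<d. M l i \<noteq> 0" and nj: "\<exists>l<d. M l j \<noteq> 0"
  shows "(\<exists>c. c \<noteq> 0 \<and> (\<forall>l<d. M l j = c * M l i)) \<longleftrightarrow>
    (\<forall>l<d. inverse (first_nonzero d M i) * M l i = inverse (first_nonzero d M j) * M l j)"
proof
  assume "\<exists>c. c \<noteq> 0 \<and> (\<forall>l<d. M l j = c * M l i)"
  then obtain c where c: "c \<noteq> 0" "\<forall>l<d. M l j = c * M l i"
    by blast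
  then have "(\<lambda>l. l < d \<and> M l j \<noteq> 0) = (\<lambda>l. l < d \<and> M l i \<noteq> 0)"
    by auto
  then have "first_nonzero d M j = c * first_nonzero d M i"
    using c LeastI_ex[OF ni] unfolding first_nonzero_def by simp
  then show "\<forall>l<d. inverse (first_nonzero d M i) * M l i = inverse (first_nonzero d M j) * M l j"
    using c first_nonzero_neq_zero[where M = M, OF ni] by (simp add: field_simps)
next
  assume norm: "\<forall>l<d. inverse (first_nonzero d M i) * M l i = inverse (first_nonzero d M j) * M l j"
  have fi: "first_nonzero d M i \<noteq> 0" and fj: "first_nonzero d M j \<noteq> 0"
    using first_nonzero_neq_zero[where M = M, OF ni] first_nonzero_neq_zero[where M = M, OF nj]
    by blast+
  then have "\<forall>l<d. M l j = (first_nonzero d M j / first_nonzero d M i) * M l i"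
    using norm by (auto simp: field_simps)
  then show "\<exists>c. c \<noteq> 0 \<and> (\<forall>l<d. M l j = c * M l i)"
    using fi fj by (intro exI[of _ "first_nonzero d M j / first_nonzero d M i"]) simp
qed

theorem lemma5p2:
  fixes n k :: nat and H :: "(nat \<Rightarrow> nat) set" and Om :: "nat \<Rightarrow> nat set"
    and g1 :: "nat \<Rightarrow> nat" and phi :: "nat \<Rightarrow> nat \<Rightarrow> nat"
    and d :: nat and M :: "nat \<Rightarrow> nat \<Rightarrow> 'p::prime_card mod_ring"
    and i j :: nat
  assumes InP: "InP_Cp CARD('p) n k H Om"
    and g1_gen: "g1 \<in> constituent H (Om 1)"
                "constituent H (Om 1) = range (\<lambda>r. g1 ^^ r)"
    and phi: "\<forall>i\<in>{1..k}. perm_iso_witness (phi i) (Om 1) (Om i)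
                 (constituent H (Om 1)) (constituent H (Om i))"
    and M: "generator_matrix k ((gamma k Om phi g1 :: (nat \<Rightarrow> nat) \<Rightarrow> nat \<Rightarrow> 'p mod_ring) ` H) d M"
    and ij: "i \<in> {1..k}" "j \<in> {1..k}"
  shows "perm_equiv H (Om i) (Om j) \<longleftrightarrow>
    (\<forall>l<d. inverse (first_nonzero d M i) * M l i = inverse (first_nonzero d M j) * M l j)"
proof -
  let ?\<gamma> = "gamma k Om phi g1 :: (nat \<Rightarrow> nat) \<Rightarrow> nat \<Rightarrow> 'p mod_ring"
  obtain xi where orbit_i: "cyclic_orbit H (Om i) xi (gen_i Om phi g1 i) (\<lambda>h. ?\<gamma> h i)"
    using InP_cyclic_orbit[OF InP g1_gen phi ij(1)] .
  obtain xj where orbit_j: "cyclic_orbit H (Om j) xj (gen_i Om phi g1 j) (\<lambda>h. ?\<gamma> h j)"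
    using InP_cyclic_orbit[OF InP g1_gen phi ij(2)] .
  have nonzero: "\<exists>l<d. M l q \<noteq> 0" if "cyclic_orbit H (Om q) x a (\<lambda>h. ?\<gamma> h q)" "q \<in> {1..k}"
    for q x a
    using cyclic_orbit.exponent_one[OF that(1)] generator_matrix_column_nonzero[OF M that(2)] by force
  have "perm_equiv H (Om i) (Om j) \<longleftrightarrow> (\<exists>c. c \<noteq> 0 \<and> (\<forall>h\<in>H. ?\<gamma> h j = c * ?\<gamma> h i))"
    by (rule perm_equiv_iff_exponents_proportional[OF orbit_i orbit_j])
  also have "\<dots> \<longleftrightarrow> (\<exists>c. c \<noteq> 0 \<and> (\<forall>l<d. M l j = c * M l i))"
    using generator_matrix_columns_proportional_iff[OF M ij] by blast
  also have "\<dots> \<longleftrightarrow> (\<forall>l<d. inverse (first_nonzero d M i) * M l i = inverse (first_nonzero d M j) * M l j)"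
    by (rule columns_proportional_iff_normalized_eq[OF nonzero[OF orbit_i ij(1)] nonzero[OF orbit_j ij(2)]])
  finally show ?thesis .
qed

end
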